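(* The set of natural numbers that occur exactly twice in $(a(n))_{n\ge 0}$ equals the set of natural numbers that are not of the form $\lfloor \varphi k+\tfrac12\rfloor$ for any integer $k\ge 0$ (i.e., the complement in $\mathbb{N}$ of $\{\lfloor \varphi k+\tfrac12\rfloor : k\ge 0\}$).
   Context: $\mathbb{N}=\{0,1,2,\ldots\}$, $\varphi=(1+\sqrt5)/2$. Let $(F_n)_{n\ge 0}$ be the Fibonacci numbers: $F_0=0$, $F_1=1$, $F_n=F_{n-1}+F_{n-2}$ for $n\ge 2$. Define $(a(n))_{n\ge 0}$ (OEIS A105774) by $a(0)=0$, $a(1)=1$, and for $n\ge 2$, $a(n)=F_{j+1}-a(n-F_j)$, where $j\ge 2$ is the unique index with $F_j<n\le F_{j+1}$. *)

theory Defs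
  imports Complex_Main "HOL-Number_Theory.Fib"
begin

definition fib_index :: "nat \<Rightarrow> nat" where
  "fib_index n = (THE j. 2 \<le> j \<and> fib j < n \<and> n \<le> fib (Suc j))"

lemma le_fib_Suc: "n \<le> fib (Suc n)"
proof (induction n rule: nat_less_induct)
  case (1 n)
  show ?case
  proof (cases "n < 2")
    case True then show ?thesis by (cases n) (auto simp: numeral_2_eq_2 less_Suc_eq)
  next
    case False
    then obtain m where m: "n = Suc (Suc m)" by (metis add_2_eq_Suc le_Suc_ex not_less)
    have "m \<le> fib (Suc m)" "Suc m \<le> fib (Suc (Suc m))" using 1 m by auto
    moreover have "fib (Suc n) = fib (Suc (Suc m)) + fib (Suc m)" using m by simp
    moreover have "fib (Suc m) \<ge> 1" using fib_neq_0_nat[of "Suc m"] by simp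
    ultimately show ?thesis using m by linarith
  qed
qed

lemma fib_index_ex: "2 \<le> n \<Longrightarrow> \<exists>j. 2 \<le> j \<and> fib j < n \<and> n \<le> fib (Suc j)"
proof -
  assume n: "2 \<le> n"
  have ex: "\<exists>j. n \<le> fib (Suc j)"
    using le_fib_Suc by blast
  define j where "j = (LEAST j. n \<le> fib (Suc j))"
  have j1: "n \<le> fib (Suc j)" unfolding j_def using ex by (rule LeastI_ex)
  have j2: "\<And>i. i < j \<Longrightarrow> \<not> n \<le> fib (Suc i)" unfolding j_def using not_less_Least by blast
  have "j \<ge> 2"
  proof (rule ccontr)
    assume "\<not> 2 \<le> j"
    then have "j = 0 \<or> j = 1" by auto
    then show False using j1 n by (auto simp: numeral_2_eq_2)
  qed
  moreover have "fib j < n"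
    using j2[of "j - 1"] \<open>j \<ge> 2\<close> by (simp add: Suc_diff_1 not_le)
  ultimately show ?thesis using j1 by blast
qed

lemma fib_index_props:
  assumes "2 \<le> n"
  shows "2 \<le> fib_index n \<and> fib (fib_index n) < n \<and> n \<le> fib (Suc (fib_index n))"
proof -
  have uniq: "\<And>i j :: nat. fib i < n \<and> n \<le> fib (Suc i) \<Longrightarrow> 2 \<le> i \<Longrightarrow> fib j < n \<and> n \<le> fib (Suc j) \<Longrightarrow> 2 \<le> j \<Longrightarrow> i = j"
  proof -
    fix i j :: nat
    assume a: "fib i < n \<and> n \<le> fib (Suc i)" "2 \<le> i" "fib j < n \<and> n \<le> fib (Suc j)" "2 \<le> j"
    show "i = j"
    proof (rule ccontr)
      assume "i \<noteq> j"
      then have "i < j \<or> j < i" by auto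
      then show False
      proof
        assume "i < j" then have "fib (Suc i) \<le> fib j" by (simp add: fib_mono)
        then show False using a by linarith
      next
        assume "j < i" then have "fib (Suc j) \<le> fib i" by (simp add: fib_mono)
        then show False using a by linarith
      qed
    qed
  qed
  obtain j where j: "2 \<le> j \<and> fib j < n \<and> n \<le> fib (Suc j)" using fib_index_ex[OF assms] by blast
  have "fib_index n = j" unfolding fib_index_def
    by (rule the_equality) (use j uniq in blast)+
  then show ?thesis using j by simp
qed

function A105774 :: "nat \<Rightarrow> nat" where
  "A105774 n = (if n = 0 then 0 else if n = 1 then 1
     else fib (Suc (fib_index n)) - A105774 (n - fib (fib_index n)))"
  by auto
termination
proof (relation "measure id")
  fix n :: nat
  assume "\<not> n = 0" "\<not> n = 1"
  then have "2 \<le> n" by auto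
  from fib_index_props[OF this] have "2 \<le> fib_index n" "fib (fib_index n) < n" by auto
  moreover have "0 < fib (fib_index n)" using \<open>2 \<le> fib_index n\<close> by (simp add: fib_neq_0_nat)
  ultimately show "(n - fib (fib_index n), n) \<in> measure id" using \<open>2 \<le> n\<close> by auto
qed simp

end

theory Submission
  imports Defs
begin

text \<open>
  Write \<open>F j\<close> for the Fibonacci numbers, \<open>\<psi> = 1 - \<phi>\<close> and \<open>G\<close> for the set of the
  \<open>\<lfloor>\<phi> k + 1/2\<rfloor>\<close>. On the block \<open>F j < n \<le> F (j+1)\<close> the sequence satisfies
  \<open>a n = F (j+1) - a (n - F j)\<close> and takes values in \<open>[F j, F (j+1))\<close>. Hence for
  \<open>F j < m < F (j+1)\<close> the preimage of \<open>m\<close> is a translate of the preimage of \<open>F (j+1) - m\<close>,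
  while \<open>F (j+1)\<close> (for \<open>j \<ge> 3\<close>) is not a value at all.

  The set \<open>G\<close> contains \<open>F (j+1) = \<phi> F j + \<psi>\<^sup>j\<close> and is invariant under the same reflection
  \<open>m \<mapsto> F (j+1) - m\<close>: the rounding error of \<open>\<phi> (F j - k)\<close> is that of \<open>\<phi> k\<close>, negated and
  shifted by \<open>\<psi>\<^sup>j\<close>. The shift can only cross \<open>\<plusminus>1/2\<close> if \<open>(2m \<plusminus> 1) / (2k)\<close> approximates \<open>\<phi>\<close>
  so well that the norm \<open>p\<^sup>2 - p q - q\<^sup>2\<close> of \<open>(2m \<plusminus> 1, 2k)\<close>, an odd integer never equal
  to \<open>\<plusminus>3\<close>, is smaller than 4 in absolute value, hence \<open>\<plusminus>1\<close>; then \<open>2m \<plusminus> 1 = F (j+1)\<close>, which the block bounds exclude.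
  Induction on \<open>m\<close> propagates the small cases \<open>a\<^sup>-\<^sup>1{0} = {0}\<close>, \<open>a\<^sup>-\<^sup>1{1} = {1, 2}\<close>,
  \<open>a\<^sup>-\<^sup>1{2} = {3}\<close>.
\<close>

lemma fib_3: "fib 3 = 2" and fib_4: "fib 4 = 3"
  by (simp_all add: numeral_eq_Suc)

lemma fib_less_fibD: "fib i < fib j \<Longrightarrow> i < j"
  using fib_mono[of j i] by linarith

definition \<phi> :: real where "\<phi> = (1 + sqrt 5) / 2"
definition \<psi> :: real where "\<psi> = (1 - sqrt 5) / 2"

lemma sqrt_5_bounds: "2 < sqrt (5::real)" "sqrt (5::real) < 3"
  by (simp_all add: real_less_rsqrt real_less_lsqrt)

lemma phi_eq_psi_plus_sqrt_5: "\<phi> = \<psi> + sqrt 5"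
  by (simp add: \<phi>_def \<psi>_def field_simps)

lemma phi_plus_psi: "\<phi> + \<psi> = 1"
  by (simp add: \<phi>_def \<psi>_def field_simps)

lemma phi_times_psi: "\<phi> * \<psi> = -1"
proof -
  have "\<phi> * \<psi> = (1 - sqrt 5 * sqrt 5) / 4" by (simp add: \<phi>_def \<psi>_def field_simps)
  then show ?thesis by simp
qed

lemma phi_bounds: "3/2 < \<phi>" "\<phi> < 2"
  using sqrt_5_bounds by (simp_all add: \<phi>_def)

lemma psi_bounds: "-1 < \<psi>" "\<psi> < 0" "\<psi>\<^sup>2 < 1/2"
proof -
  show "-1 < \<psi>" "\<psi> < 0" using sqrt_5_bounds by (simp_all add: \<psi>_def)
  have "\<psi>\<^sup>2 = (3 - sqrt 5) / 2" by (simp add: \<psi>_def power2_eq_square field_simps)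
  then show "\<psi>\<^sup>2 < 1/2" using sqrt_5_bounds by simp
qed

lemma abs_psi_power_less: "2 \<le> n \<Longrightarrow> \<bar>\<psi> ^ n\<bar> < 1/2"
proof -
  assume "2 \<le> n"
  then have "\<bar>\<psi>\<bar> ^ n \<le> \<bar>\<psi>\<bar>\<^sup>2" using psi_bounds by (intro power_decreasing) auto
  then show ?thesis using psi_bounds by (simp add: power_abs)
qed

lemma phi_power_eq: "\<phi> ^ n = \<psi> ^ n + sqrt 5 * fib n"
  using fib_closed_form[of n] by (simp add: \<phi>_def \<psi>_def)

lemma fib_Suc_eq_phi: "real (fib (Suc n)) = \<phi> * fib n + \<psi> ^ n"
proof -
  have "sqrt 5 * fib (Suc n) = \<phi> * \<phi> ^ n - \<psi> * \<psi> ^ n"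
    using phi_power_eq[of "Suc n"] by simp
  also have "\<dots> = \<phi> * (\<phi> ^ n - \<psi> ^ n) + \<psi> ^ n * (\<phi> - \<psi>)"
    by (simp add: algebra_simps)
  also have "\<dots> = \<phi> * (sqrt 5 * fib n) + \<psi> ^ n * sqrt 5"
    using phi_power_eq[of n] phi_eq_psi_plus_sqrt_5 by simp
  also have "\<dots> = sqrt 5 * (\<phi> * fib n + \<psi> ^ n)"
    by (simp add: algebra_simps)
  finally show ?thesis by simp
qed

lemma norm_form_factor: "(x - y * \<phi>) * (x - y * \<psi>) = x\<^sup>2 - x * y - y\<^sup>2"
proof -
  have "(x - y * \<phi>) * (x - y * \<psi>) = x\<^sup>2 - x * y * (\<phi> + \<psi>) + y\<^sup>2 * (\<phi> * \<psi>)"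
    by (simp add: algebra_simps power2_eq_square)
  then show ?thesis by (simp add: phi_plus_psi phi_times_psi)
qed

lemma norm_form_eq_1_imp_fib:
  fixes p q :: nat
  assumes "\<bar>(int p)\<^sup>2 - int p * int q - (int q)\<^sup>2\<bar> = 1"
  shows "(p = 0 \<and> q = 1) \<or> (\<exists>i. p = fib (Suc i) \<and> q = fib i)"
  using assms
proof (induction "p + q" arbitrary: p q rule: less_induct)
  case less
  consider "q = 0" | "0 < q" "p < q" | "0 < q" "q \<le> p" by linarith
  then show ?case
  proof cases
    case 1
    then have "int p * int p = 1" using less.prems by (simp add: power2_eq_square)
    then have "p = 1" by (metis nat_mult_eq_1_iff of_nat_1 of_nat_eq_iff of_nat_mult)
    with 1 show ?thesis by (auto intro: exI[of _ 0])
  next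
    case 2
    then have "(int p + 1)\<^sup>2 \<le> (int q)\<^sup>2" by (intro power_mono) auto
    then have "(int p)\<^sup>2 + 2 * int p + 1 \<le> (int q)\<^sup>2" by (simp add: power2_sum)
    moreover have "0 \<le> int p * int q" by simp
    ultimately have "2 * int p + 1 \<le> (int q)\<^sup>2 + int p * int q - (int p)\<^sup>2" by linarith
    then have "p = 0" using less.prems by auto
    then have "int q * int q = 1" using less.prems by (simp add: power2_eq_square)
    then have "q = 1" by (metis nat_mult_eq_1_iff of_nat_1 of_nat_eq_iff of_nat_mult)
    with \<open>p = 0\<close> show ?thesis by simp
  next
    case 3
    have "\<bar>(int q)\<^sup>2 - int q * int (p - q) - (int (p - q))\<^sup>2\<bar> = 1"
      using less.prems 3 by (simp add: of_nat_diff power2_eq_square algebra_simps abs_minus_commute)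
    then obtain i where "q = fib (Suc i)" "p - q = fib i"
      using less.hyps[of q "p - q"] 3 by auto
    then have "p = fib (Suc (Suc i))" "q = fib (Suc i)" using 3 by simp_all
    then show ?thesis by blast
  qed
qed

lemma norm_form_abs_neq_3: "\<bar>(p::int)\<^sup>2 - p * q - q\<^sup>2\<bar> \<noteq> 3"
proof
  assume N3: "\<bar>p\<^sup>2 - p * q - q\<^sup>2\<bar> = 3"
  define a b r t where "a = p div 3" and "b = q div 3" and "r = p mod 3" and "t = q mod 3"
  have "p = 3 * a + r" "q = 3 * b + t" by (simp_all add: a_def b_def r_def t_def)
  then have "p\<^sup>2 - p * q - q\<^sup>2
      = 3 * (a * (3 * a + 2 * r - 3 * b - t) - b * (r + 3 * b + 2 * t)) + (r\<^sup>2 - r * t - t\<^sup>2)"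
    by (simp add: power2_eq_square algebra_simps)
  moreover have "3 dvd p\<^sup>2 - p * q - q\<^sup>2" using dvd_abs_iff N3 by (metis dvd_refl)
  ultimately have "3 dvd r\<^sup>2 - r * t - t\<^sup>2" by (metis dvd_add_right_iff dvd_triv_left)
  moreover have "r \<in> {0, 1, 2}" "t \<in> {0, 1, 2}" by (auto simp: r_def t_def)
  ultimately have "r = 0" "t = 0" by (elim insertE emptyE; simp add: power2_eq_square)+
  then have "3 dvd p" "3 dvd q" by (simp_all add: r_def t_def dvd_eq_mod_eq_0)
  then obtain c d where "p = 3 * c" "q = 3 * d" by (elim dvdE)
  then have "p\<^sup>2 - p * q - q\<^sup>2 = 9 * (c\<^sup>2 - c * d - d\<^sup>2)" by (simp add: power2_eq_square algebra_simps)
  then have "9 dvd \<bar>p\<^sup>2 - p * q - q\<^sup>2\<bar>" by simp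
  then show False using N3 by simp
qed

lemma psi_power_close_imp_eq:
  assumes "i \<le> j + 1" and same_sign: "0 < \<psi> ^ i * \<psi> ^ j"
    and close: "\<bar>\<psi> ^ i\<bar> \<le> 2 * \<bar>\<psi> ^ j\<bar>"
  shows "i = j"
proof -
  have "even (i + j)" using same_sign psi_bounds by (auto simp: power_add[symmetric] zero_less_power_eq)
  then have "i \<le> j" using \<open>i \<le> j + 1\<close> by presburger
  moreover have "\<not> i + 2 \<le> j"
  proof
    assume "i + 2 \<le> j"
    then have "\<bar>\<psi>\<bar> ^ j \<le> \<bar>\<psi>\<bar> ^ (i + 2)" using psi_bounds by (intro power_decreasing) auto
    also have "\<dots> = \<bar>\<psi>\<bar> ^ i * \<psi>\<^sup>2" by (simp add: power_add power2_eq_square)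
    also have "\<dots> < \<bar>\<psi>\<bar> ^ i * (1/2)" using psi_bounds by (intro mult_strict_left_mono) auto
    finally show False using close by (simp add: power_abs)
  qed
  moreover have "even (j - i)" using \<open>even (i + j)\<close> \<open>i \<le> j\<close> by presburger
  ultimately show "i = j" by presburger
qed

lemma norm_form_abs_less_4:
  fixes p q j :: nat
  assumes j: "2 \<le> j" and "0 < p" and q_less: "q < 2 * fib j"
    and same_sign: "0 \<le> (real p - real q * \<phi>) * \<psi> ^ j"
    and close: "\<bar>real p - real q * \<phi>\<bar> \<le> 2 * \<bar>\<psi> ^ j\<bar>"
  shows "\<bar>(int p)\<^sup>2 - int p * int q - (int q)\<^sup>2\<bar> < 4"
proof -
  define d e F where "d = real p - real q * \<phi>" and "e = \<psi> ^ j" and "F = real (fib j)"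
  have e_small: "\<bar>e\<bar> < 1/2" using abs_psi_power_less[OF j] by (simp add: e_def)
  have cassini: "\<bar>e\<bar> * (e + sqrt 5 * F) = 1"
  proof -
    have "\<bar>e\<bar> * \<phi> ^ j = \<bar>(\<psi> * \<phi>) ^ j\<bar>"
      using phi_bounds by (simp add: e_def power_mult_distrib abs_mult)
    also have "\<dots> = 1" by (simp add: mult.commute[of \<psi>] phi_times_psi)
    finally show ?thesis by (simp add: e_def F_def phi_power_eq)
  qed
  then have "e \<noteq> 0" by auto
  have "q + 1 \<le> 2 * fib j" using q_less by simp
  then have "real q \<le> 2 * F - 1" unfolding F_def by linarith
  then have q_le: "real q * sqrt 5 \<le> (2 * F - 1) * sqrt 5" by (simp add: mult_right_mono)
  have "real q * \<psi> \<le> 0" using psi_bounds by (intro mult_nonneg_nonpos) auto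
  moreover have conj_eq: "d + real q * sqrt 5 = real p - real q * \<psi>"
    by (simp add: d_def phi_eq_psi_plus_sqrt_5 algebra_simps)
  ultimately have conj_pos: "0 < d + real q * sqrt 5" using \<open>0 < p\<close> by simp
  have d_le: "d \<le> e + \<bar>e\<bar>"
    using close same_sign by (cases "0 \<le> e") (auto simp: d_def e_def zero_le_mult_iff)
  have "real_of_int ((int p)\<^sup>2 - int p * int q - (int q)\<^sup>2) = (real p)\<^sup>2 - real p * real q - (real q)\<^sup>2"
    by simp
  also have "\<dots> = (real p - real q * \<phi>) * (real p - real q * \<psi>)"
    by (rule norm_form_factor[symmetric])
  also have "\<dots> = d * (d + real q * sqrt 5)"
    unfolding conj_eq by (simp add: d_def)
  finally have "\<bar>real_of_int ((int p)\<^sup>2 - int p * int q - (int q)\<^sup>2)\<bar> = \<bar>d\<bar> * (d + real q * sqrt 5)"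
    using conj_pos by (simp add: abs_mult)
  also have "\<dots> \<le> 2 * \<bar>e\<bar> * (e + \<bar>e\<bar> + (2 * F - 1) * sqrt 5)"
  proof (rule mult_mono)
    show "\<bar>d\<bar> \<le> 2 * \<bar>e\<bar>" using close by (simp add: d_def e_def)
    show "d + real q * sqrt 5 \<le> e + \<bar>e\<bar> + (2 * F - 1) * sqrt 5" using d_le q_le by linarith
  qed (use conj_pos in auto)
  also have "\<dots> = 4 + 2 * e * (e - \<bar>e\<bar>) - 2 * \<bar>e\<bar> * sqrt 5"
    using cassini by (simp add: algebra_simps)
  also have "\<dots> \<le> 4 + 2 * \<bar>e\<bar> * (2 * \<bar>e\<bar>) - 2 * \<bar>e\<bar> * sqrt 5"
    by (cases "0 \<le> e") (simp_all add: algebra_simps)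
  also have "\<dots> < 4"
  proof -
    have "2 * \<bar>e\<bar> * (2 * \<bar>e\<bar>) < 2 * \<bar>e\<bar> * sqrt 5"
      using \<open>e \<noteq> 0\<close> e_small sqrt_5_bounds by (intro mult_strict_left_mono) auto
    then show ?thesis by linarith
  qed
  finally show ?thesis by linarith
qed

lemma close_approximation_eq_fib_Suc:
  fixes p q j :: nat
  assumes j: "2 \<le> j" and "odd p" and "even q" and q_less: "q < 2 * fib j"
    and same_sign: "0 \<le> (real p - real q * \<phi>) * \<psi> ^ j"
    and close: "\<bar>real p - real q * \<phi>\<bar> \<le> 2 * \<bar>\<psi> ^ j\<bar>"
  shows "p = fib (Suc j)"
proof -
  have "0 < p" using \<open>odd p\<close> by (cases p) auto
  define N where "N = (int p)\<^sup>2 - int p * int q - (int q)\<^sup>2"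
  have "\<bar>N\<bar> < 4" unfolding N_def using norm_form_abs_less_4[OF j \<open>0 < p\<close> q_less same_sign close] .
  moreover have "odd N" using \<open>odd p\<close> \<open>even q\<close> by (simp add: N_def power2_eq_square)
  moreover have "\<bar>N\<bar> \<noteq> 3" unfolding N_def using norm_form_abs_neq_3 by simp
  ultimately have "\<bar>N\<bar> = 1" by presburger
  then obtain i where i: "p = fib (Suc i)" "q = fib i"
    using norm_form_eq_1_imp_fib[of p q] \<open>odd p\<close> by (auto simp: N_def)
  have d: "real p - real q * \<phi> = \<psi> ^ i" using fib_Suc_eq_phi[of i] unfolding i by simp
  have "fib i < fib (Suc (Suc j))" using q_less i fib_Suc_mono[of j] by simp
  then have "i \<le> j + 1" using fib_mono[of "Suc (Suc j)" i] by linarith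
  moreover have "0 < \<psi> ^ i * \<psi> ^ j"
  proof -
    have "\<psi> ^ i * \<psi> ^ j \<noteq> 0" using psi_bounds by simp
    then show ?thesis using same_sign unfolding d by linarith
  qed
  moreover have "\<bar>\<psi> ^ i\<bar> \<le> 2 * \<bar>\<psi> ^ j\<bar>" using close unfolding d .
  ultimately have "i = j" by (rule psi_power_close_imp_eq)
  then show ?thesis using i by simp
qed

definition rounded_phi_multiples :: "nat set" where
  "rounded_phi_multiples = {m. \<exists>k::nat. int m = \<lfloor>\<phi> * real k + 1/2\<rfloor>}"

lemma mem_rounded_phi_multiples_iff:
  "m \<in> rounded_phi_multiples \<longleftrightarrow> (\<exists>k::nat. -1/2 \<le> \<phi> * k - m \<and> \<phi> * k - m < 1/2)"
proof -
  have "int m = \<lfloor>\<phi> * real k + 1/2\<rfloor> \<longleftrightarrow> -1/2 \<le> \<phi> * k - m \<and> \<phi> * k - m < 1/2" for k :: nat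
    by (subst eq_commute) (auto simp: floor_eq_iff)
  then show ?thesis by (simp add: rounded_phi_multiples_def)
qed

lemma zero_mem_rounded_phi_multiples: "0 \<in> rounded_phi_multiples"
  unfolding mem_rounded_phi_multiples_iff by (intro exI[of _ 0]) simp

lemma one_not_mem_rounded_phi_multiples: "1 \<notin> rounded_phi_multiples"
proof
  assume "1 \<in> rounded_phi_multiples"
  then obtain k :: nat where k: "\<phi> * k < 3/2" "1/2 \<le> \<phi> * k"
    unfolding mem_rounded_phi_multiples_iff by auto
  then have "k \<noteq> 0" by (cases "k = 0") auto
  then have "\<phi> \<le> \<phi> * k" using phi_bounds by simp
  then show False using k phi_bounds by linarith
qed

lemma fib_Suc_mem_rounded_phi_multiples: "2 \<le> j \<Longrightarrow> fib (Suc j) \<in> rounded_phi_multiples"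
  unfolding mem_rounded_phi_multiples_iff
  using fib_Suc_eq_phi[of j] abs_psi_power_less[of j] by (intro exI[of _ "fib j"]) auto

lemma rounding_stable_under_psi_power:
  fixes k m j :: nat
  assumes j: "2 \<le> j" and "1 \<le> m" "k < fib j"
    and "2 * m + 1 \<noteq> fib (Suc j)" "2 * m \<noteq> fib (Suc j) + 1"
    and "-1/2 \<le> \<phi> * k - m" "\<phi> * k - m < 1/2"
  shows "-1/2 < \<phi> * k - m + \<psi> ^ j \<and> \<phi> * k - m + \<psi> ^ j \<le> 1/2"
proof (rule ccontr)
  define x e where "x = \<phi> * k - m" and "e = \<psi> ^ j"
  have x: "-1/2 \<le> x" "x < 1/2" using assms(6,7) by (simp_all add: x_def)
  assume "\<not> ?thesis"
  then consider "1/2 < x + e" | "x + e \<le> -1/2" by (auto simp: x_def e_def)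
  then show False
  proof cases
    case 1
    have "2 * m + 1 = fib (Suc j)"
    proof (rule close_approximation_eq_fib_Suc[OF j])
      have "real (2 * m + 1) - real (2 * k) * \<phi> = 1 - 2 * x" by (simp add: x_def algebra_simps)
      moreover have "0 < 1 - 2 * x" "1 - 2 * x < 2 * e" using 1 x by simp_all
      ultimately show "0 \<le> (real (2 * m + 1) - real (2 * k) * \<phi>) * \<psi> ^ j"
        and "\<bar>real (2 * m + 1) - real (2 * k) * \<phi>\<bar> \<le> 2 * \<bar>\<psi> ^ j\<bar>"
        by (simp_all add: e_def)
    qed (use \<open>k < fib j\<close> in simp_all)
    then show False using \<open>2 * m + 1 \<noteq> fib (Suc j)\<close> by simp
  next
    case 2
    have "2 * m - 1 = fib (Suc j)"
    proof (rule close_approximation_eq_fib_Suc[OF j])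
      have "real (2 * m - 1) - real (2 * k) * \<phi> = - 1 - 2 * x"
        using \<open>1 \<le> m\<close> by (simp add: x_def of_nat_diff algebra_simps)
      moreover have "- 1 - 2 * x \<le> 0" "2 * e \<le> - 1 - 2 * x" using 2 x by simp_all
      ultimately show "0 \<le> (real (2 * m - 1) - real (2 * k) * \<phi>) * \<psi> ^ j"
        and "\<bar>real (2 * m - 1) - real (2 * k) * \<phi>\<bar> \<le> 2 * \<bar>\<psi> ^ j\<bar>"
        by (simp_all add: e_def mult_nonpos_nonpos)
    qed (use \<open>1 \<le> m\<close> \<open>k < fib j\<close> in simp_all)
    then show False using \<open>2 * m \<noteq> fib (Suc j) + 1\<close> \<open>1 \<le> m\<close> by simp
  qed
qed

lemma rounded_phi_multiples_reflect:
  assumes j: "2 \<le> j" and m: "1 \<le> m" "m < fib (Suc j)"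
    and "2 * m + 1 \<noteq> fib (Suc j)" "2 * m \<noteq> fib (Suc j) + 1"
    and "m \<in> rounded_phi_multiples"
  shows "fib (Suc j) - m \<in> rounded_phi_multiples"
proof -
  obtain k :: nat where k: "-1/2 \<le> \<phi> * k - m" "\<phi> * k - m < 1/2"
    using \<open>m \<in> rounded_phi_multiples\<close> unfolding mem_rounded_phi_multiples_iff by blast
  have fib_j: "real (fib (Suc j)) = \<phi> * fib j + \<psi> ^ j" by (rule fib_Suc_eq_phi)
  have "real m + 1 \<le> fib (Suc j)" using m by linarith
  then have "\<phi> * k < \<phi> * fib j" using k fib_j abs_psi_power_less[OF j] by linarith
  then have "k < fib j" using phi_bounds by simp
  then have "-1/2 < \<phi> * k - m + \<psi> ^ j \<and> \<phi> * k - m + \<psi> ^ j \<le> 1/2"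
    using rounding_stable_under_psi_power[OF j] m k assms(4,5) by blast
  moreover have "\<phi> * real (fib j - k) - real (fib (Suc j) - m) = - (\<phi> * k - m + \<psi> ^ j)"
    using \<open>k < fib j\<close> m fib_j by (simp add: of_nat_diff algebra_simps)
  ultimately show ?thesis
    unfolding mem_rounded_phi_multiples_iff by (intro exI[of _ "fib j - k"]) auto
qed

lemma rounded_phi_multiples_reflect_iff:
  assumes j: "2 \<le> j" and m: "fib j < m" "m < fib (Suc j)"
  shows "m \<in> rounded_phi_multiples \<longleftrightarrow> fib (Suc j) - m \<in> rounded_phi_multiples"
proof -
  obtain i where i: "j = Suc i" using j by (cases j) auto
  have "fib j \<le> fib (Suc j)" "fib (Suc j) \<le> 2 * fib j"
    using fib_mono[of i j] by (simp_all add: i)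
  then show ?thesis
    using rounded_phi_multiples_reflect[OF j, of m] rounded_phi_multiples_reflect[OF j, of "fib (Suc j) - m"] m
    by auto
qed

lemma fib_index_eqI:
  assumes "2 \<le> j" "fib j < n" "n \<le> fib (Suc j)"
  shows "fib_index n = j"
proof -
  have "2 \<le> n" using assms fib_neq_0_nat[of j] by simp
  from fib_index_props[OF this] assms show ?thesis
    using fib_less_fibD[of j "Suc (fib_index n)"] fib_less_fibD[of "fib_index n" "Suc j"] by simp
qed

declare A105774.simps [simp del]

lemma A105774_0 [simp]: "A105774 0 = 0"
  and A105774_1 [simp]: "A105774 1 = 1" "A105774 (Suc 0) = 1"
  by (simp_all add: A105774.simps)

lemma A105774_block:
  assumes "2 \<le> j" "fib j < n" "n \<le> fib (Suc j)"
  shows "A105774 n = fib (Suc j) - A105774 (n - fib j)"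
proof -
  have "2 \<le> n" using assms fib_neq_0_nat[of j] by simp
  then show ?thesis using fib_index_eqI[OF assms] by (simp add: A105774.simps[of n])
qed

lemma A105774_block_bounds:
  assumes "2 \<le> j" "fib j < n" "n \<le> fib (Suc j)"
  shows "fib j \<le> A105774 n \<and> A105774 n < fib (Suc j) \<and> (4 \<le> j \<longrightarrow> fib j < A105774 n)"
  using assms
proof (induction n arbitrary: j rule: less_induct)
  case (less n)
  obtain i where i: "j = Suc i" using less.prems by (cases j) auto
  define n' where "n' = n - fib j"
  have n': "1 \<le> n'" "n' \<le> fib i" "n' < n"
    using less.prems fib_neq_0_nat[of j] by (simp_all add: n'_def i)
  have "1 \<le> A105774 n' \<and> A105774 n' \<le> fib i \<and> (4 \<le> j \<longrightarrow> A105774 n' < fib i)"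
  proof (cases "n' = 1")
    case True
    have "4 \<le> j \<Longrightarrow> fib 3 \<le> fib i" using i by (intro fib_mono) simp
    then show ?thesis using True n' by (auto simp: fib_3)
  next
    case False
    then have "2 \<le> n'" using n' by simp
    from fib_index_props[OF this] obtain k where k: "2 \<le> k" "fib k < n'" "n' \<le> fib (Suc k)" by blast
    then have "fib (Suc k) \<le> fib i" using fib_less_fibD[of k i] n' by (intro fib_mono) simp
    moreover have "fib k \<le> A105774 n'" "A105774 n' < fib (Suc k)" using less.IH[OF n'(3) k] by simp_all
    moreover have "1 \<le> fib k" using k fib_neq_0_nat[of k] by simp
    ultimately show ?thesis by linarith
  qed
  moreover have "A105774 n = fib (Suc j) - A105774 n'"
    unfolding n'_def by (rule A105774_block[OF less.prems])
  ultimately show ?case by (simp add: i) arith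
qed

lemma A105774_ge_fib: "fib i < n \<Longrightarrow> fib i \<le> A105774 n"
proof -
  assume "fib i < n"
  show ?thesis
  proof (cases "n = 1")
    case True
    then show ?thesis using \<open>fib i < n\<close> by simp
  next
    case False
    then have "2 \<le> n" using \<open>fib i < n\<close> by simp
    from fib_index_props[OF this] obtain j where j: "2 \<le> j" "fib j < n" "n \<le> fib (Suc j)" by blast
    then have "fib i \<le> fib j" using fib_less_fibD[of i "Suc j"] \<open>fib i < n\<close> by (intro fib_mono) simp
    then show ?thesis using A105774_block_bounds[OF j] by simp
  qed
qed

lemma A105774_gt_3: "4 \<le> n \<Longrightarrow> 3 < A105774 n"
proof -
  assume "4 \<le> n"
  from fib_index_props[of n] \<open>4 \<le> n\<close> obtain j where j: "2 \<le> j" "fib j < n" "n \<le> fib (Suc j)"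
    by auto
  have "4 \<le> j"
  proof (rule ccontr)
    assume "\<not> 4 \<le> j"
    then have "fib (Suc j) \<le> fib 4" by (intro fib_mono) simp
    then show False using j \<open>4 \<le> n\<close> by (simp add: fib_4)
  qed
  then have "3 \<le> fib j" using fib_mono[of 4 j] by (simp add: fib_4)
  then show ?thesis using A105774_block_bounds[OF j] \<open>4 \<le> j\<close> by simp
qed

lemma preimage_A105774_small:
  "{n. A105774 n = 0} = {0}" "{n. A105774 n = 1} = {1, 2}" "{n. A105774 n = 2} = {3}"
proof -
  have small_values: "A105774 2 = 1" "A105774 3 = 2"
    using A105774_block[of 2 2] A105774_block[of 3 3] by (simp_all add: fib_3 fib_4)
  have small: "n = 0 \<or> n = 1 \<or> n = 2 \<or> n = 3" if "A105774 n \<le> 3" for n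
    using A105774_gt_3[of n] that by presburger
  have "A105774 n = 0 \<longleftrightarrow> n = 0" "A105774 n = 1 \<longleftrightarrow> n = 1 \<or> n = 2" "A105774 n = 2 \<longleftrightarrow> n = 3"
    for n using small[of n] small_values by auto
  then show "{n. A105774 n = 0} = {0}" "{n. A105774 n = 1} = {1, 2}" "{n. A105774 n = 2} = {3}"
    by auto
qed

lemma A105774_gt_1_imp_ge_2: "1 < A105774 n \<Longrightarrow> 2 \<le> n"
  by (rule ccontr) (auto simp: not_le less_2_cases_iff)

lemma preimage_A105774_fib_Suc:
  assumes "3 \<le> j"
  shows "{n. A105774 n = fib (Suc j)} = {}"
proof -
  have "A105774 n \<noteq> fib (Suc j)" for n
  proof
    assume an: "A105774 n = fib (Suc j)"
    have "fib 4 \<le> fib (Suc j)" using assms by (intro fib_mono) simp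
    then have "2 \<le> n" using an by (intro A105774_gt_1_imp_ge_2) (simp add: fib_4)
    from fib_index_props[OF this] obtain i where i: "2 \<le> i" "fib i < n" "n \<le> fib (Suc i)" by blast
    note bounds = A105774_block_bounds[OF i]
    then have "j < i" using an fib_less_fibD[of "Suc j" "Suc i"] by simp
    then have "fib (Suc j) \<le> fib i" by (intro fib_mono) simp
    then show False using bounds an \<open>j < i\<close> assms by simp
  qed
  then show ?thesis by simp
qed

lemma preimage_A105774_reflect:
  assumes j: "2 \<le> j" and m: "fib j < m" "m < fib (Suc j)"
  shows "{n. A105774 n = m} = (\<lambda>n. n + fib j) ` {n. A105774 n = fib (Suc j) - m}"
proof (intro set_eqI iffI)
  fix n
  assume "n \<in> {n. A105774 n = m}"
  then have an: "A105774 n = m" by simp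
  have "2 \<le> n" using an m fib_neq_0_nat[of j] j by (intro A105774_gt_1_imp_ge_2) simp
  from fib_index_props[OF this] obtain i where i: "2 \<le> i" "fib i < n" "n \<le> fib (Suc i)" by blast
  have "i = j"
    using A105774_block_bounds[OF i] an m fib_less_fibD[of i "Suc j"] fib_less_fibD[of j "Suc i"] by simp
  then have "A105774 n = fib (Suc j) - A105774 (n - fib j)" using A105774_block[OF i] by simp
  then have "A105774 (n - fib j) = fib (Suc j) - m" using an m by simp
  moreover have "n = (n - fib j) + fib j" using i \<open>i = j\<close> by simp
  ultimately show "n \<in> (\<lambda>n. n + fib j) ` {n. A105774 n = fib (Suc j) - m}" by blast
next
  fix n
  assume "n \<in> (\<lambda>n. n + fib j) ` {n. A105774 n = fib (Suc j) - m}"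
  then obtain n' where n: "n = n' + fib j" and an': "A105774 n' = fib (Suc j) - m" by auto
  obtain i where i: "j = Suc i" using j by (cases j) auto
  have "A105774 n' < fib i" using an' m by (simp add: i)
  then have "n' \<le> fib i" using A105774_ge_fib[of i n'] by linarith
  moreover have "n' \<noteq> 0" using an' m by (cases "n' = 0") auto
  ultimately have "A105774 n = fib (Suc j) - A105774 n'"
    using A105774_block[OF j, of n] n by (simp add: i)
  then show "n \<in> {n. A105774 n = m}" using an' m by simp
qed

lemma card_preimage_A105774_eq_2_iff:
  "card {n. A105774 n = m} = 2 \<longleftrightarrow> m \<notin> rounded_phi_multiples"
proof (induction m rule: less_induct)
  case (less m)
  consider "m = 0" | "m = 1" | "m = 2" | "3 \<le> m" by linarith
  then show ?case
  proof cases
    case 1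
    then show ?thesis using preimage_A105774_small zero_mem_rounded_phi_multiples by simp
  next
    case 2
    then show ?thesis using preimage_A105774_small one_not_mem_rounded_phi_multiples by simp
  next
    case 3
    have "2 \<in> rounded_phi_multiples" using fib_Suc_mem_rounded_phi_multiples[of 2] by (simp add: fib_3)
    then show ?thesis using 3 preimage_A105774_small by simp
  next
    case 4
    from fib_index_props[of m] 4 obtain j where j: "2 \<le> j" "fib j < m" "m \<le> fib (Suc j)" by auto
    show ?thesis
    proof (cases "m = fib (Suc j)")
      case True
      then have "3 \<le> j" using 4 j by (cases "j = 2") (auto simp: fib_3)
      then show ?thesis
        using True preimage_A105774_fib_Suc fib_Suc_mem_rounded_phi_multiples[OF j(1)] by simp
    next
      case False
      then have m: "fib j < m" "m < fib (Suc j)" using j by simp_all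
      have "fib (Suc j) - m < m" using m fib_mono[of "j - 1" j] j by (cases j) auto
      moreover have "card {n. A105774 n = m} = card {n. A105774 n = fib (Suc j) - m}"
        unfolding preimage_A105774_reflect[OF j(1) m] by (simp add: card_image)
      ultimately show ?thesis using less.IH rounded_phi_multiples_reflect_iff[OF j(1) m] by simp
    qed
  qed
qed

theorem proposition3:
  "{m :: nat. card {n :: nat. A105774 n = m} = 2}
   = - {m. \<exists>k :: nat. int m = \<lfloor>(1 + sqrt 5) / 2 * real k + 1 / 2\<rfloor>}"
  using card_preimage_A105774_eq_2_iff by (auto simp: rounded_phi_multiples_def \<phi>_def)

end
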